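(* Let $G$ be a group, $k\ge1$ and $s\ge0$ integers such that for every $i<k$ there is a set $A_i\subseteq G$ with $|A_i|\le s$ such that $Z(G/Z_i(G))=C_{G/Z_i(G)}(A_i)$ (where $A_i$ is read via its image in $G/Z_i(G)$). Let $c\in G$. If the set $\{(x_0,\dots,x_k)\in G^{k+1}:[x_0,x_1,\dots,x_k]=c\}$ is $2(s+1)^k$-large in $G^{k+1}$, then $c=1$ and $G$ is nilpotent of class at most $k$.
   Context: $[a,b]=a^{-1}b^{-1}ab$ and commutators are left-normed: $[x_0,x_1,\dots,x_{j+1}]=[[x_0,\dots,x_j],x_{j+1}]$. $Z_i(G)$ denotes the $i$-th term of the upper central series ($Z_0(G)=1$, $Z_{i+1}(G)/Z_i(G)=Z(G/Z_i(G))$). A subset $X$ of a group $K$ is $m$-large in $K$ if the intersection of any $m$ left translates $a_1X\cap\dots\cap a_mX$ ($a_i\in K$) is non-empty. *)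

theory Defs
  imports "HOL-Algebra.Algebra"
begin

definition comm :: "('a, 'b) monoid_scheme \<Rightarrow> 'a \<Rightarrow> 'a \<Rightarrow> 'a" where
  "comm G a b = inv\<^bsub>G\<^esub> a \<otimes>\<^bsub>G\<^esub> inv\<^bsub>G\<^esub> b \<otimes>\<^bsub>G\<^esub> a \<otimes>\<^bsub>G\<^esub> b"

fun lcomm :: "('a, 'b) monoid_scheme \<Rightarrow> (nat \<Rightarrow> 'a) \<Rightarrow> nat \<Rightarrow> 'a" where
  "lcomm G x 0 = x 0"
| "lcomm G x (Suc j) = comm G (lcomm G x j) (x (Suc j))"

definition centre :: "('a, 'b) monoid_scheme \<Rightarrow> 'a set" where
  "centre M = {z \<in> carrier M. \<forall>g\<in>carrier M. z \<otimes>\<^bsub>M\<^esub> g = g \<otimes>\<^bsub>M\<^esub> z}"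

definition centralizer :: "('a, 'b) monoid_scheme \<Rightarrow> 'a set \<Rightarrow> 'a set" where
  "centralizer M A = {z \<in> carrier M. \<forall>a\<in>A. z \<otimes>\<^bsub>M\<^esub> a = a \<otimes>\<^bsub>M\<^esub> z}"

fun upper_central :: "('a, 'b) monoid_scheme \<Rightarrow> nat \<Rightarrow> 'a set" where
  "upper_central G 0 = {\<one>\<^bsub>G\<^esub>}"
| "upper_central G (Suc i) =
     {g \<in> carrier G. upper_central G i #>\<^bsub>G\<^esub> g \<in> centre (G Mod upper_central G i)}"

definition m_large :: "nat \<Rightarrow> ('a, 'b) monoid_scheme \<Rightarrow> 'a set \<Rightarrow> bool" where
  "m_large m M S \<longleftrightarrow>
     (\<forall>a :: nat \<Rightarrow> 'a. (\<forall>j<m. a j \<in> carrier M) \<longrightarrow> (\<Inter>j<m. l_coset M (a j) S) \<noteq> {})"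

end

theory Submission
  imports Defs
begin

(*
  Fix g in G and, for i < k, sets A_i of size at most s with Z(G/Z_i) = C(A_i). The box
  {1, g} x T_(k-1) x ... x T_0 with T_i = A_i + {1} has at most 2(s+1)^k points t, so
  largeness yields a single y with [t_0 y_0, ..., t_k y_k] = c for every t in the box.
  Changing a coordinate t_j from 1 to a in A_(k-j) multiplies [u, y_j], u the preceding
  commutator, by a conjugate of [u, a]. Descending in j, this shows that every prefix
  [t_0 y_0, ..., t_(k-r) y_(k-r)] lies in Z_r. For r = k it puts y_0 and g y_0, hence g,
  into Z_k; for r = 1 it makes c a commutator with a central element, so c = 1.
*)

lemma lcomm_cong: "(\<And>j. j \<le> n \<Longrightarrow> x j = x' j) \<Longrightarrow> lcomm G x n = lcomm G x' n"
  by (induction n) auto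

lemma lcomm_fun_upd_Suc: "lcomm G (x(Suc n := v)) (Suc n) = comm G (lcomm G x n) v"
proof -
  have "lcomm G (x(Suc n := v)) n = lcomm G x n"
    by (rule lcomm_cong) simp
  then show ?thesis by simp
qed

lemma card_PiE_le_prod:
  "finite I \<Longrightarrow> (\<And>i. i \<in> I \<Longrightarrow> card (B i) \<le> n i) \<Longrightarrow> card (\<Pi>\<^sub>E i\<in>I. B i) \<le> (\<Prod>i\<in>I. n i)"
  by (simp add: card_PiE prod_mono)

context group
begin

lemma mult_inv_cancel_left [simp]: "x \<in> carrier G \<Longrightarrow> y \<in> carrier G \<Longrightarrow> x \<otimes> (inv x \<otimes> y) = y"
  by (simp add: m_assoc [symmetric])

lemma inv_mult_cancel_left [simp]: "x \<in> carrier G \<Longrightarrow> y \<in> carrier G \<Longrightarrow> inv x \<otimes> (x \<otimes> y) = y"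
  by (simp add: m_assoc [symmetric])

lemma comm_closed [simp]: "x \<in> carrier G \<Longrightarrow> y \<in> carrier G \<Longrightarrow> comm G x y \<in> carrier G"
  by (simp add: comm_def)

lemma lcomm_closed: "(\<And>j. j \<le> n \<Longrightarrow> x j \<in> carrier G) \<Longrightarrow> lcomm G x n \<in> carrier G"
  by (induction n) auto

lemma comm_one_left [simp]: "g \<in> carrier G \<Longrightarrow> comm G \<one> g = \<one>"
  by (simp add: comm_def)

lemma comm_mult_left:
  "\<lbrakk>x \<in> carrier G; y \<in> carrier G; g \<in> carrier G\<rbrakk> \<Longrightarrow>
   comm G (x \<otimes> y) g = inv y \<otimes> comm G x g \<otimes> y \<otimes> comm G y g"
  by (simp add: comm_def inv_mult_group m_assoc)

lemma comm_inv_left: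
  "\<lbrakk>x \<in> carrier G; g \<in> carrier G\<rbrakk> \<Longrightarrow> comm G (inv x) g = x \<otimes> inv (comm G x g) \<otimes> inv x"
  by (simp add: comm_def inv_mult_group m_assoc)

lemma comm_mult_right_quotient:
  "\<lbrakk>u \<in> carrier G; a \<in> carrier G; y \<in> carrier G\<rbrakk> \<Longrightarrow>
   inv (comm G u y) \<otimes> comm G u (a \<otimes> y) = inv y \<otimes> comm G u a \<otimes> y"
  by (simp add: comm_def inv_mult_group m_assoc)

lemma rcos_eq_iff:
  "\<lbrakk>subgroup N G; a \<in> carrier G; b \<in> carrier G\<rbrakk> \<Longrightarrow> N #> a = N #> b \<longleftrightarrow> a \<otimes> inv b \<in> N"
  by (metis repr_independence repr_independenceD subgroup.rcos_module is_group rcos_self)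

lemma rcos_mult_commute_iff:
  assumes "N \<lhd> G" "x \<in> carrier G" "g \<in> carrier G"
  shows "(N #> x) <#> (N #> g) = (N #> g) <#> (N #> x) \<longleftrightarrow> comm G x g \<in> N"
proof -
  interpret N: normal N G by fact
  have "(N #> x) <#> (N #> g) = (N #> g) <#> (N #> x) \<longleftrightarrow> x \<otimes> g \<otimes> inv (g \<otimes> x) \<in> N"
    using assms by (simp add: N.rcos_sum rcos_eq_iff N.subgroup_axioms)
  also have "\<dots> \<longleftrightarrow> comm G x g \<in> N"
  proof
    assume "x \<otimes> g \<otimes> inv (g \<otimes> x) \<in> N"
    then have "inv (g \<otimes> x) \<otimes> (x \<otimes> g \<otimes> inv (g \<otimes> x)) \<otimes> (g \<otimes> x) \<in> N"
      using assms by (intro N.inv_op_closed1) auto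
    moreover have "inv (g \<otimes> x) \<otimes> (x \<otimes> g \<otimes> inv (g \<otimes> x)) \<otimes> (g \<otimes> x) = comm G x g"
      using assms by (simp add: comm_def inv_mult_group m_assoc)
    ultimately show "comm G x g \<in> N" by simp
  next
    assume "comm G x g \<in> N"
    then have "(g \<otimes> x) \<otimes> comm G x g \<otimes> inv (g \<otimes> x) \<in> N"
      using assms by (intro N.inv_op_closed2) auto
    moreover have "(g \<otimes> x) \<otimes> comm G x g \<otimes> inv (g \<otimes> x) = x \<otimes> g \<otimes> inv (g \<otimes> x)"
      using assms by (simp add: comm_def inv_mult_group m_assoc)
    ultimately show "x \<otimes> g \<otimes> inv (g \<otimes> x) \<in> N" by simp
  qed
  finally show ?thesis .
qed

lemma centre_FactGroup_iff:
  "\<lbrakk>N \<lhd> G; x \<in> carrier G\<rbrakk> \<Longrightarrow>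
   N #> x \<in> centre (G Mod N) \<longleftrightarrow> (\<forall>g\<in>carrier G. comm G x g \<in> N)"
  using rcos_mult_commute_iff[of N x] by (auto simp: centre_def carrier_FactGroup)

lemma centralizer_FactGroup_iff:
  "\<lbrakk>N \<lhd> G; x \<in> carrier G; A \<subseteq> carrier G\<rbrakk> \<Longrightarrow>
   N #> x \<in> centralizer (G Mod N) ((\<lambda>a. N #> a) ` A) \<longleftrightarrow> (\<forall>a\<in>A. comm G x a \<in> N)"
  using rcos_mult_commute_iff[of N x] by (auto simp: centralizer_def carrier_FactGroup)

lemma central_mod_normal:
  assumes "N \<lhd> G"
  shows "{x \<in> carrier G. \<forall>g\<in>carrier G. comm G x g \<in> N} \<lhd> G" (is "?Z \<lhd> G")
proof -
  interpret N: normal N G by fact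
  have N_sub: "N \<subseteq> ?Z"
  proof
    fix n assume n: "n \<in> N"
    have "comm G n g \<in> N" if g: "g \<in> carrier G" for g
    proof -
      have "comm G n g = inv n \<otimes> (inv g \<otimes> n \<otimes> g)"
        using n g by (simp add: comm_def m_assoc)
      then show ?thesis using n g N.inv_op_closed1 by simp
    qed
    then show "n \<in> ?Z" using n by auto
  qed
  have mult: "x \<otimes> y \<in> ?Z" if "x \<in> ?Z" "y \<in> ?Z" for x y
  proof -
    have "inv y \<otimes> comm G x g \<otimes> y \<otimes> comm G y g \<in> N" if "g \<in> carrier G" for g
      using that \<open>x \<in> ?Z\<close> \<open>y \<in> ?Z\<close> N.inv_op_closed1 by auto
    then show ?thesis using that by (auto simp: comm_mult_left)
  qed
  have inv: "inv x \<in> ?Z" if "x \<in> ?Z" for x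
  proof -
    have "x \<otimes> inv (comm G x g) \<otimes> inv x \<in> N" if "g \<in> carrier G" for g
      using that \<open>x \<in> ?Z\<close> N.inv_op_closed2 by auto
    then show ?thesis using that by (auto simp: comm_inv_left)
  qed
  have "subgroup ?Z G"
    by (rule subgroupI) (use N_sub mult inv in auto)
  moreover have "z \<otimes> x \<otimes> inv z \<in> ?Z" if "z \<in> carrier G" "x \<in> ?Z" for z x
  proof -
    have "z \<otimes> x \<otimes> inv z = x \<otimes> comm G x (inv z)"
      using that by (simp add: comm_def m_assoc)
    moreover have "comm G x (inv z) \<in> ?Z" using that N_sub by auto
    ultimately show ?thesis using mult that by simp
  qed
  ultimately show ?thesis by (rule normal_invI)
qed

lemma upper_central_normal_Suc:
  "upper_central G i \<lhd> G \<and>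
   upper_central G (Suc i) = {x \<in> carrier G. \<forall>g\<in>carrier G. comm G x g \<in> upper_central G i}"
proof (induction i)
  case 0
  then show ?case using centre_FactGroup_iff[OF one_is_normal] by (auto simp: one_is_normal)
next
  case (Suc i)
  then have "upper_central G (Suc i) \<lhd> G" using central_mod_normal by simp
  then show ?case using centre_FactGroup_iff by auto
qed

lemma upper_central_normal: "upper_central G i \<lhd> G"
  using upper_central_normal_Suc by blast

lemma mem_upper_central_Suc_iff:
  "x \<in> upper_central G (Suc i) \<longleftrightarrow>
   x \<in> carrier G \<and> (\<forall>g\<in>carrier G. comm G x g \<in> upper_central G i)"
  using upper_central_normal_Suc by blast

lemma mem_upper_central_Suc_if_centralizes:
  assumes "centre (G Mod upper_central G i) =
           centralizer (G Mod upper_central G i) ((\<lambda>a. upper_central G i #> a) ` A)"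
    and "A \<subseteq> carrier G" "x \<in> carrier G" "\<forall>a\<in>A. comm G x a \<in> upper_central G i"
  shows "x \<in> upper_central G (Suc i)"
  using assms centralizer_FactGroup_iff[OF upper_central_normal]
    centre_FactGroup_iff[OF upper_central_normal] mem_upper_central_Suc_iff
  by simp

lemma mem_upper_central_Suc_if_comm_quotients:
  assumes "centre (G Mod upper_central G i) =
           centralizer (G Mod upper_central G i) ((\<lambda>a. upper_central G i #> a) ` A)"
    and "A \<subseteq> carrier G" "u \<in> carrier G" "y \<in> carrier G"
    and "\<forall>a\<in>A. inv (comm G u y) \<otimes> comm G u (a \<otimes> y) \<in> upper_central G i"
  shows "u \<in> upper_central G (Suc i)"
proof (rule mem_upper_central_Suc_if_centralizes[OF assms(1-3)], intro ballI)
  interpret Z: normal "upper_central G i" G by (rule upper_central_normal)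
  fix a assume a: "a \<in> A"
  then have a_carrier: "a \<in> carrier G" using assms(2) by blast
  have "inv y \<otimes> comm G u a \<otimes> y \<in> upper_central G i"
    using a assms(5) comm_mult_right_quotient[OF assms(3) a_carrier assms(4)] by auto
  then have "y \<otimes> (inv y \<otimes> comm G u a \<otimes> y) \<otimes> inv y \<in> upper_central G i"
    by (rule Z.inv_op_closed2[OF assms(4)])
  then show "comm G u a \<in> upper_central G i"
    using a_carrier assms by (simp add: m_assoc)
qed

lemma m_large_common_translate:
  assumes "m_large m G L" "L \<subseteq> carrier G"
    and "finite S" "S \<subseteq> carrier G" "S \<noteq> {}" "card S \<le> m"
  shows "\<exists>y\<in>carrier G. \<forall>t\<in>S. t \<otimes> y \<in> L"
proof -
  obtain f where f: "bij_betw f {0..<card S} S"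
    using ex_bij_betw_nat_finite assms(3) by blast
  have card_pos: "0 < card S"
    using assms(3,5) by (simp add: card_gt_0_iff)
  \<comment> \<open>the translates by inverses of elements of S, repeated to make up m of them\<close>
  define a where "a j = inv (f (if j < card S then j else 0))" for j
  have f_S: "f j \<in> S" if "j < card S" for j
    using bij_betwE[OF f] that by simp
  have a_carrier: "a j \<in> carrier G" for j
  proof -
    have "f (if j < card S then j else 0) \<in> S"
      using f_S card_pos by simp
    then show ?thesis
      using assms(4) by (auto simp: a_def)
  qed
  have "(\<Inter>j<m. a j <# L) \<noteq> {}"
    using assms(1) a_carrier by (simp add: m_large_def)
  then obtain y where y: "\<And>j. j < m \<Longrightarrow> y \<in> a j <# L"
    by blast
  have "y \<in> carrier G \<and> t \<otimes> y \<in> L" if "t \<in> S" for t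
  proof -
    obtain j where j: "j < card S" "f j = t"
      using f \<open>t \<in> S\<close> unfolding bij_betw_def by (metis atLeastLessThan_iff imageE)
    then have "y \<in> inv t <# L"
      using y[of j] assms(6) by (simp add: a_def)
    then obtain x where "x \<in> L" "y = inv t \<otimes> x"
      by (auto simp: l_coset_def)
    moreover have "t \<in> carrier G" "x \<in> carrier G"
      using that \<open>x \<in> L\<close> assms(2,4) by auto
    ultimately show ?thesis
      by simp
  qed
  then show ?thesis
    using assms(5) by blast
qed

lemma m_large_lcomm_box_translate:
  assumes "m_large m (product_group {..k} (\<lambda>_. G))
             {x \<in> carrier (product_group {..k} (\<lambda>_. G)). lcomm G x k = c}"
    and B: "\<And>j. j \<le> k \<Longrightarrow> B j \<subseteq> carrier G \<and> finite (B j)"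
    and "(\<Pi>\<^sub>E j\<in>{..k}. B j) \<noteq> {}" "card (\<Pi>\<^sub>E j\<in>{..k}. B j) \<le> m"
  obtains y where "\<And>j. j \<le> k \<Longrightarrow> y j \<in> carrier G"
    and "\<And>t. t \<in> (\<Pi>\<^sub>E j\<in>{..k}. B j) \<Longrightarrow> lcomm G (\<lambda>j. t j \<otimes> y j) k = c"
proof -
  let ?P = "product_group {..k} (\<lambda>_. G)"
  have P: "group ?P"
    by (simp add: is_group)
  have box_P: "(\<Pi>\<^sub>E j\<in>{..k}. B j) \<subseteq> carrier ?P"
    using B by (force simp: PiE_iff)
  have box_finite: "finite (\<Pi>\<^sub>E j\<in>{..k}. B j)"
    using B by (intro finite_PiE) auto
  obtain y where y: "y \<in> carrier ?P"
    and ty: "\<And>t. t \<in> (\<Pi>\<^sub>E j\<in>{..k}. B j) \<Longrightarrow> lcomm G (t \<otimes>\<^bsub>?P\<^esub> y) k = c"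
    using group.m_large_common_translate[OF P assms(1) _ box_finite box_P assms(3,4)] by auto
  show ?thesis
  proof
    show "y j \<in> carrier G" if "j \<le> k" for j
      using y that by (auto simp: PiE_iff)
    show "lcomm G (\<lambda>j. t j \<otimes> y j) k = c" if "t \<in> (\<Pi>\<^sub>E j\<in>{..k}. B j)" for t
    proof -
      have "lcomm G (t \<otimes>\<^bsub>?P\<^esub> y) k = lcomm G (\<lambda>j. t j \<otimes> y j) k"
        by (rule lcomm_cong) simp
      then show ?thesis
        using ty[OF that] by simp
    qed
  qed
qed

end

locale constant_lcomm_box = group G for G :: "('a, 'b) monoid_scheme" (structure) +
  fixes k :: nat and A B :: "nat \<Rightarrow> 'a set" and y :: "nat \<Rightarrow> 'a" and c :: 'a
  assumes centralizers: "\<And>i. i < k \<Longrightarrow> A i \<subseteq> carrier G \<and>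
      centre (G Mod upper_central G i) =
      centralizer (G Mod upper_central G i) ((\<lambda>a. upper_central G i #> a) ` A i)"
    and B_carrier: "\<And>j. j \<le> k \<Longrightarrow> B j \<subseteq> carrier G"
    and B_witnesses: "\<And>j. 1 \<le> j \<Longrightarrow> j \<le> k \<Longrightarrow> insert \<one> (A (k - j)) \<subseteq> B j"
    and y_carrier: "\<And>j. j \<le> k \<Longrightarrow> y j \<in> carrier G"
    and lcomm_const: "\<And>t. t \<in> (\<Pi>\<^sub>E j\<in>{..k}. B j) \<Longrightarrow> lcomm G (\<lambda>j. t j \<otimes> y j) k = c"
begin

abbreviation box :: "(nat \<Rightarrow> 'a) set"
  where "box \<equiv> \<Pi>\<^sub>E j\<in>{..k}. B j"

lemma lcomm_translate_closed:
  assumes "t \<in> box" "n \<le> k"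
  shows "lcomm G (\<lambda>j. t j \<otimes> y j) n \<in> carrier G"
proof (rule lcomm_closed)
  fix j assume "j \<le> n"
  then have "t j \<in> B j" "j \<le> k"
    using assms by (auto simp: PiE_iff)
  then show "t j \<otimes> y j \<in> carrier G"
    using B_carrier y_carrier by blast
qed

lemma lcomm_mem_upper_central_step:
  assumes r: "r < k" and t: "t \<in> box"
    and quotients: "\<And>t t'. t \<in> box \<Longrightarrow> t' \<in> box \<Longrightarrow>
      inv (lcomm G (\<lambda>j. t' j \<otimes> y j) (k - r)) \<otimes> lcomm G (\<lambda>j. t j \<otimes> y j) (k - r)
        \<in> upper_central G r"
  shows "lcomm G (\<lambda>j. t j \<otimes> y j) (k - Suc r) \<in> upper_central G (Suc r)"
proof -
  define n where "n = k - Suc r"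
  have Suc_n: "Suc n = k - r" "Suc n \<le> k" "k - Suc n = r"
    using r by (auto simp: n_def)
  then have A_sub: "insert \<one> (A r) \<subseteq> B (Suc n)"
    using B_witnesses[of "Suc n"] by simp
  define u where "u = lcomm G (\<lambda>j. t j \<otimes> y j) n"
  have u: "u \<in> carrier G"
    using lcomm_translate_closed t Suc_n by (simp add: u_def)
  have yn: "y (Suc n) \<in> carrier G"
    using y_carrier Suc_n by blast
  have upd: "t(Suc n := v) \<in> box" if "v \<in> B (Suc n)" for v
    using PiE_fun_upd[OF that t] Suc_n by (simp add: insert_absorb)
  have lcomm_upd: "lcomm G (\<lambda>j. (t(Suc n := v)) j \<otimes> y j) (Suc n) = comm G u (v \<otimes> y (Suc n))"
    for v
  proof -
    have "(\<lambda>j. (t(Suc n := v)) j \<otimes> y j) = (\<lambda>j. t j \<otimes> y j)(Suc n := v \<otimes> y (Suc n))"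
      by auto
    then show ?thesis
      by (simp only: u_def lcomm_fun_upd_Suc)
  qed
  have "\<forall>a\<in>A r. inv (comm G u (y (Suc n))) \<otimes> comm G u (a \<otimes> y (Suc n)) \<in> upper_central G r"
  proof
    fix a assume "a \<in> A r"
    then have "t(Suc n := a) \<in> box" "t(Suc n := \<one>) \<in> box"
      using A_sub upd by auto
    from quotients[OF this] show
      "inv (comm G u (y (Suc n))) \<otimes> comm G u (a \<otimes> y (Suc n)) \<in> upper_central G r"
      using yn by (simp only: Suc_n(1)[symmetric] lcomm_upd l_one)
  qed
  then have "u \<in> upper_central G (Suc r)"
    using mem_upper_central_Suc_if_comm_quotients centralizers[OF r] u yn by blast
  then show ?thesis
    by (simp add: u_def n_def)
qed

lemma lcomm_mem_upper_central:
  assumes "r < k" "t \<in> box"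
  shows "lcomm G (\<lambda>j. t j \<otimes> y j) (k - Suc r) \<in> upper_central G (Suc r)"
  using assms
proof (induction r arbitrary: t)
  case 0
  show ?case
  proof (rule lcomm_mem_upper_central_step)
    fix t t' assume t: "t \<in> box" "t' \<in> box"
    have "c \<in> carrier G"
      using lcomm_translate_closed[OF t(1) order_refl] lcomm_const[OF t(1)] by simp
    then show "inv (lcomm G (\<lambda>j. t' j \<otimes> y j) (k - 0)) \<otimes> lcomm G (\<lambda>j. t j \<otimes> y j) (k - 0)
        \<in> upper_central G 0"
      using lcomm_const[OF t(1)] lcomm_const[OF t(2)] by simp
  qed (use 0 in auto)
next
  case (Suc r)
  have Z: "subgroup (upper_central G (Suc r)) G"
    using upper_central_normal normal_imp_subgroup by blast
  show ?case
  proof (rule lcomm_mem_upper_central_step)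
    fix t t' assume t: "t \<in> box" "t' \<in> box"
    have "lcomm G (\<lambda>j. t j \<otimes> y j) (k - Suc r) \<in> upper_central G (Suc r)"
      "lcomm G (\<lambda>j. t' j \<otimes> y j) (k - Suc r) \<in> upper_central G (Suc r)"
      using Suc.IH Suc.prems(1) t by auto
    then show "inv (lcomm G (\<lambda>j. t' j \<otimes> y j) (k - Suc r)) \<otimes> lcomm G (\<lambda>j. t j \<otimes> y j) (k - Suc r)
        \<in> upper_central G (Suc r)"
      by (intro subgroup.m_closed[OF Z] subgroup.m_inv_closed[OF Z])
  qed (use Suc.prems in auto)
qed

lemma box_point_mem_box:
  assumes "b \<in> B 0"
  shows "(\<lambda>j\<in>{..k}. if j = 0 then b else \<one>) \<in> box"
  using assms B_witnesses by auto

lemma translate_mem_upper_central_top: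
  assumes "1 \<le> k" "b \<in> B 0"
  shows "b \<otimes> y 0 \<in> upper_central G k"
  using lcomm_mem_upper_central[of "k - 1", OF _ box_point_mem_box[OF assms(2)]] assms(1)
  by simp

lemma quotient_mem_upper_central_top:
  assumes "1 \<le> k" "b \<in> B 0" "b' \<in> B 0"
  shows "b \<otimes> inv b' \<in> upper_central G k"
proof -
  have Z: "subgroup (upper_central G k) G"
    using upper_central_normal normal_imp_subgroup by blast
  have "b \<otimes> y 0 \<in> upper_central G k" "b' \<otimes> y 0 \<in> upper_central G k"
    using translate_mem_upper_central_top[OF assms(1)] assms(2,3) by blast+
  then have "(b \<otimes> y 0) \<otimes> inv (b' \<otimes> y 0) \<in> upper_central G k"
    using subgroup.m_closed[OF Z] subgroup.m_inv_closed[OF Z] by blast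
  moreover have "b \<in> carrier G" "b' \<in> carrier G" "y 0 \<in> carrier G"
    using assms(2,3) B_carrier[of 0] y_carrier[of 0] by auto
  ultimately show ?thesis
    by (simp add: inv_mult_group m_assoc)
qed

lemma lcomm_const_eq_one:
  assumes "1 \<le> k" "b \<in> B 0"
  shows "c = \<one>"
proof -
  define t where "t = (\<lambda>j\<in>{..k}. if j = 0 then b else \<one>)"
  have t: "t \<in> box"
    unfolding t_def by (rule box_point_mem_box[OF assms(2)])
  obtain n where n: "k = Suc n"
    using assms(1) by (cases k) auto
  have "lcomm G (\<lambda>j. t j \<otimes> y j) n \<in> upper_central G (Suc 0)"
    using lcomm_mem_upper_central[OF _ t, of 0] n by simp
  moreover have "t k \<in> B k"
    using t by (simp add: PiE_iff)
  then have "t k \<otimes> y k \<in> carrier G"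
    using B_carrier y_carrier by blast
  ultimately have "comm G (lcomm G (\<lambda>j. t j \<otimes> y j) n) (t k \<otimes> y k) \<in> upper_central G 0"
    using mem_upper_central_Suc_iff by blast
  then have "lcomm G (\<lambda>j. t j \<otimes> y j) k \<in> upper_central G 0"
    using n by simp
  then show ?thesis
    using lcomm_const[OF t] by simp
qed

end

lemma (in group) m_large_lcomm_imp_mem_upper_central:
  assumes k: "1 \<le> k"
    and A: "\<And>i. i < k \<Longrightarrow> A i \<subseteq> carrier G \<and> finite (A i) \<and> card (A i) \<le> s \<and>
      centre (G Mod upper_central G i) =
      centralizer (G Mod upper_central G i) ((\<lambda>a. upper_central G i #> a) ` A i)"
    and large: "m_large (2 * (s + 1) ^ k) (product_group {..k} (\<lambda>_. G))
      {x \<in> carrier (product_group {..k} (\<lambda>_. G)). lcomm G x k = c}"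
    and g: "g \<in> carrier G"
  shows "c = \<one> \<and> g \<in> upper_central G k"
proof -
  define B where "B j = (if j = 0 then {\<one>, g} else insert \<one> (A (k - j)))" for j
  have B: "B j \<subseteq> carrier G \<and> finite (B j) \<and> card (B j) \<le> (if j = 0 then 2 else s + 1)"
    if "j \<le> k" for j
  proof (cases "j = 0")
    case True
    then show ?thesis
      using g by (simp add: B_def card_insert_if)
  next
    case False
    then have "k - j < k"
      using that k by simp
    then show ?thesis
      using A[of "k - j"] False by (simp add: B_def card_insert_if)
  qed
  have "card (\<Pi>\<^sub>E j\<in>{..k}. B j) \<le> (\<Prod>j\<le>k. if j = 0 then 2 else s + 1)"
    using B by (intro card_PiE_le_prod) auto
  also have "\<dots> = 2 * (s + 1) ^ k"
    by (simp add: prod.atMost_shift)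
  finally have card_box: "card (\<Pi>\<^sub>E j\<in>{..k}. B j) \<le> 2 * (s + 1) ^ k" .
  have "(\<Pi>\<^sub>E j\<in>{..k}. B j) \<noteq> {}"
    by (simp add: PiE_eq_empty_iff B_def)
  moreover have "B j \<subseteq> carrier G \<and> finite (B j)" if "j \<le> k" for j
    using B[OF that] by blast
  ultimately obtain y where y: "\<And>j. j \<le> k \<Longrightarrow> y j \<in> carrier G"
    and lcomm_const: "\<And>t. t \<in> (\<Pi>\<^sub>E j\<in>{..k}. B j) \<Longrightarrow> lcomm G (\<lambda>j. t j \<otimes> y j) k = c"
    using m_large_lcomm_box_translate[OF large _ _ card_box] by blast
  have box: "constant_lcomm_box G k A B y c"
    by (intro constant_lcomm_box.intro constant_lcomm_box_axioms.intro is_group)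
      (use A B y lcomm_const in \<open>auto simp: B_def\<close>)
  have "\<one> \<in> B 0" "g \<in> B 0"
    by (simp_all add: B_def)
  then have "c = \<one>" "g \<otimes> inv \<one> \<in> upper_central G k"
    using constant_lcomm_box.lcomm_const_eq_one[OF box k]
      constant_lcomm_box.quotient_mem_upper_central_top[OF box k] by blast+
  then show ?thesis
    using g by simp
qed

theorem theorem5p13:
  fixes G :: "('a, 'b) monoid_scheme" and k s :: nat and c :: 'a
  assumes "group G"
    and "k \<ge> 1"
    and "\<forall>i<k. \<exists>A. A \<subseteq> carrier G \<and> finite A \<and> card A \<le> s \<and>
           centre (G Mod upper_central G i) =
           centralizer (G Mod upper_central G i) ((\<lambda>a. upper_central G i #>\<^bsub>G\<^esub> a) ` A)"
    and "c \<in> carrier G"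
    and "m_large (2 * (s + 1) ^ k) (product_group {..k} (\<lambda>_. G))
           {x \<in> carrier (product_group {..k} (\<lambda>_. G)). lcomm G x k = c}"
  shows "c = \<one>\<^bsub>G\<^esub> \<and> upper_central G k = carrier G"
proof -
  interpret group G by fact
  obtain A where A: "\<And>i. i < k \<Longrightarrow> A i \<subseteq> carrier G \<and> finite (A i) \<and> card (A i) \<le> s \<and>
      centre (G Mod upper_central G i) =
      centralizer (G Mod upper_central G i) ((\<lambda>a. upper_central G i #>\<^bsub>G\<^esub> a) ` A i)"
    using assms(3) by metis
  have "c = \<one>\<^bsub>G\<^esub> \<and> g \<in> upper_central G k" if "g \<in> carrier G" for g
    using m_large_lcomm_imp_mem_upper_central[OF assms(2) A assms(5) that] .
  moreover have "upper_central G k \<subseteq> carrier G"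
    using upper_central_normal normal_imp_subgroup subgroup.subset by blast
  ultimately show ?thesis
    by blast
qed

end
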